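(* If $\mathcal F=\{f_1,\dots,f_M\}$ is a frame for $\mathbb C^N$ and $\mathbb M^{\mathcal F}$ is injective, then $M\ge 2N$.
   Context: A frame for $\mathbb C^N$ is a spanning family $\{f_1,\dots,f_M\}$, $\langle x,y\rangle=\sum_k x_k\overline{y_k}$. $\mathbb M^{\mathcal F}$ is injective means $|\langle x,f_k\rangle|=|\langle y,f_k\rangle|$ for all $k$ implies $y=cx$ for some $c\in\mathbb C$ with $|c|=1$. *)

theory Defs
  imports "HOL-Analysis.Analysis"
begin

text \<open>Vectors of C^N are modelled as complex ^ 'n with N = CARD('n).
  Complex scalar multiplication is the componentwise (*s).\<close>

definition cinner :: "complex ^ 'n \<Rightarrow> complex ^ 'n \<Rightarrow> complex" where
  "cinner x y = (\<Sum>i\<in>UNIV. x $ i * cnj (y $ i))"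

definition is_frame :: "(nat \<Rightarrow> complex ^ 'n) \<Rightarrow> nat \<Rightarrow> bool" where
  "is_frame f M \<longleftrightarrow> module.span (*s) (f ` {..<M}) = UNIV"

definition phaseless_injective :: "(nat \<Rightarrow> complex ^ 'n) \<Rightarrow> nat \<Rightarrow> bool" where
  "phaseless_injective f M \<longleftrightarrow>
     (\<forall>x y. (\<forall>k<M. cmod (cinner x (f k)) = cmod (cinner y (f k))) \<longrightarrow>
            (\<exists>c. cmod c = 1 \<and> y = c *s x))"

end

theory Submission
  imports Defs
begin

text \<open>
  Suppose \<open>M < 2N\<close>. Choose \<open>u \<noteq> 0\<close> with \<open>\<langle>u, f\<^sub>0\<rangle> = 0\<close>; this needs \<open>N \<ge> 2\<close>.
  Since \<open>|a + b|\<^sup>2 - |a - b|\<^sup>2 = 4 Re (conj a b)\<close>, \<open>|\<langle>u + v, f\<^sub>k\<rangle>| = |\<langle>u - v, f\<^sub>k\<rangle>|\<close> holds as soon as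
  \<open>Re (conj \<langle>u, f\<^sub>k\<rangle> \<langle>v, f\<^sub>k\<rangle>) = 0\<close>, which is a real linear condition on \<open>v\<close>, void for \<open>k = 0\<close>.
  The remaining \<open>M - 1 \<le> 2N - 2\<close> conditions in the real space \<open>\<complex>\<^sup>N \<cong> \<real>\<^sup>2\<^sup>N\<close> leave
  room for a solution \<open>v \<notin> \<real> i u\<close>. Injectivity forces \<open>u - v = c (u + v)\<close>, so \<open>v = d u\<close>,
  and since the frame does not annihilate \<open>u\<close> the conditions force \<open>d \<in> i \<real>\<close>: a contradiction.
\<close>

lemma Re_cinner: "Re (cinner x y) = x \<bullet> y"
  unfolding cinner_def inner_vec_def by (simp add: Re_sum inner_complex_def)

lemma cinner_add_left: "cinner (x + y) z = cinner x z + cinner y z"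
  unfolding cinner_def by (simp add: distrib_right sum.distrib)

lemma cinner_diff_left: "cinner (x - y) z = cinner x z - cinner y z"
  unfolding cinner_def by (simp add: left_diff_distrib sum_subtractf)

lemma cinner_scale_left: "cinner (c *s x) z = c * cinner x z"
  unfolding cinner_def by (simp add: sum_distrib_left mult.assoc)

lemma cinner_add_right: "cinner x (y + z) = cinner x y + cinner x z"
  unfolding cinner_def by (simp add: distrib_left sum.distrib)

lemma cinner_scale_right: "cinner x (c *s z) = cnj c * cinner x z"
  unfolding cinner_def by (simp add: sum_distrib_left mult_ac)

lemma cinner_zero_right: "cinner x 0 = 0"
  unfolding cinner_def by simp

lemma orthogonal_scale_iff_Re_cinner:
  "orthogonal x (c *s y) \<longleftrightarrow> Re (cnj c * cinner x y) = 0"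
  by (simp add: orthogonal_def flip: Re_cinner cinner_scale_right)

lemma Im_cinner: "Im (cinner x y) = x \<bullet> (\<i> *s y)"
  by (simp flip: Re_cinner add: cinner_scale_right)

lemma cinner_self_eq_0_iff: "cinner x x = 0 \<longleftrightarrow> x = 0"
proof
  assume "cinner x x = 0"
  then have "x \<bullet> x = 0"
    by (simp flip: Re_cinner)
  then show "x = 0"
    by simp
qed (simp add: cinner_zero_right)

lemma is_frame_cinner_nonzero:
  assumes "is_frame f M" "u \<noteq> 0"
  obtains k where "k < M" "cinner u (f k) \<noteq> 0"
proof -
  have "vec.subspace {y. cinner u y = 0}"
    unfolding vec.subspace_def
    by (simp add: cinner_zero_right cinner_add_right cinner_scale_right)
  moreover have "cinner u u \<noteq> 0"
    using assms(2) by (simp add: cinner_self_eq_0_iff)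
  ultimately have "\<not> f ` {..<M} \<subseteq> {y. cinner u y = 0}"
    using assms(1) vec.span_minimal unfolding is_frame_def by blast
  then show ?thesis
    using that by blast
qed

lemma orthogonal_not_in_span_exists:
  fixes S :: "'a::euclidean_space set"
  assumes "dim S < DIM('a)"
  obtains x where "x \<notin> span S" "\<And>y. y \<in> S \<Longrightarrow> orthogonal x y"
proof -
  obtain x where "x \<noteq> 0" and x: "\<And>y. y \<in> span S \<Longrightarrow> orthogonal x y"
    using orthogonal_to_subspace_exists[OF assms] by blast
  then have "x \<notin> span S"
    using orthogonal_self by blast
  with x show ?thesis
    using that span_base by blast
qed

lemma exists_nonzero_cinner_eq_0:
  fixes g :: "complex ^ 'n"
  assumes "CARD('n) \<ge> 2"
  obtains u where "u \<noteq> 0" "cinner u g = 0"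
proof -
  have "dim {g, \<i> *s g} \<le> card {g, \<i> *s g}"
    by (rule dim_le_card') simp
  also have "\<dots> \<le> 2"
    by (simp add: card_insert_if)
  also have "\<dots> < DIM(complex ^ 'n)"
    using assms by simp
  finally obtain u where "u \<notin> span {g, \<i> *s g}"
      and "\<And>y. y \<in> {g, \<i> *s g} \<Longrightarrow> orthogonal u y"
    using orthogonal_not_in_span_exists by blast
  then have "u \<noteq> 0" "Re (cinner u g) = 0" "Im (cinner u g) = 0"
    by (auto simp: orthogonal_def Re_cinner Im_cinner span_zero)
  then show ?thesis
    using that complex_eqI by force
qed

lemma cmod_add_eq_cmod_diff: "Re (cnj a * b) = 0 \<Longrightarrow> cmod (a + b) = cmod (a - b)"
  unfolding cmod_def by (simp add: algebra_simps power2_eq_square)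

lemma diff_eq_scale_add_imp_scale:
  fixes u v :: "complex ^ 'n"
  assumes "u \<noteq> 0" "u - v = c *s (u + v)"
  obtains d where "v = d *s u"
proof -
  have "(1 + c) * v $ i = (1 - c) * u $ i" for i
    using assms(2) by (simp add: vec_eq_iff algebra_simps)
  moreover have "1 + c \<noteq> 0"
  proof
    assume "1 + c = 0"
    then have "c = -1"
      by (simp add: add_eq_0_iff)
    then show False
      using assms by (auto simp: vec_eq_iff)
  qed
  ultimately have "v = ((1 - c) / (1 + c)) *s u"
    by (simp add: vec_eq_iff field_simps)
  then show ?thesis
    using that by blast
qed

lemma imaginary_scale_in_span:
  assumes "Re d = 0"
  shows "d *s u \<in> span {\<i> *s u}"
proof -
  have "d *s u = Im d *\<^sub>R (\<i> *s u)"
    using assms by (simp add: vec_eq_iff complex_eq_iff)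
  then show ?thesis
    by (simp add: span_base span_scale)
qed

lemma phaseless_injective_orthogonal_in_span:
  assumes "is_frame f M" "phaseless_injective f M" "u \<noteq> 0"
    and orth: "\<And>k. k < M \<Longrightarrow> Re (cnj (cinner u (f k)) * cinner v (f k)) = 0"
  shows "v \<in> span {\<i> *s u}"
proof -
  have "\<forall>k<M. cmod (cinner (u + v) (f k)) = cmod (cinner (u - v) (f k))"
    using orth by (simp add: cinner_add_left cinner_diff_left cmod_add_eq_cmod_diff)
  then obtain c where "u - v = c *s (u + v)"
    using assms(2) unfolding phaseless_injective_def by blast
  then obtain d where v: "v = d *s u"
    using diff_eq_scale_add_imp_scale assms(3) by blast
  obtain k where k: "k < M" "cinner u (f k) \<noteq> 0"
    using is_frame_cinner_nonzero assms(1,3) by blast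
  have "Re d * (cmod (cinner u (f k)))\<^sup>2 = 0"
    using orth[OF k(1)] by (simp add: v cinner_scale_left cmod_def algebra_simps power2_eq_square)
  then have "Re d = 0"
    using k(2) by simp
  then show ?thesis
    by (simp add: v imaginary_scale_in_span)
qed

theorem proposition3p6:
  fixes f :: "nat \<Rightarrow> complex ^ 'n" and M :: nat
  assumes "CARD('n) \<ge> 2"
    and "is_frame f M"
    and "phaseless_injective f M"
  shows "M \<ge> 2 * CARD('n)"
proof (rule ccontr)
  assume few: "\<not> ?thesis"
  obtain u where u: "u \<noteq> 0" "cinner u (f 0) = 0"
    using exists_nonzero_cinner_eq_0[OF assms(1)] by blast
  define W where "W = (\<lambda>k. cinner u (f k) *s f k) ` {1..<M}"
  have "dim (insert (\<i> *s u) W) \<le> card (insert (\<i> *s u) W)"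
    by (rule dim_le_card') (simp add: W_def)
  also have "\<dots> \<le> Suc (card W)"
    by (simp add: W_def card_insert_if)
  also have "\<dots> \<le> Suc (card {1..<M})"
    unfolding W_def using card_image_le by blast
  also have "\<dots> < DIM(complex ^ 'n)"
    using few assms(1) by (simp; arith)
  finally obtain v where v_notin: "v \<notin> span (insert (\<i> *s u) W)"
      and v_orth: "\<And>w. w \<in> insert (\<i> *s u) W \<Longrightarrow> orthogonal v w"
    using orthogonal_not_in_span_exists by blast
  have "v \<notin> span {\<i> *s u}"
    using v_notin span_mono[of "{\<i> *s u}" "insert (\<i> *s u) W"] by blast
  have "Re (cnj (cinner u (f k)) * cinner v (f k)) = 0" if "k < M" for k
  proof (cases "k = 0")
    case False
    then have "orthogonal v (cinner u (f k) *s f k)"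
      using v_orth that by (simp add: W_def)
    then show ?thesis
      by (simp only: orthogonal_scale_iff_Re_cinner)
  qed (simp add: u)
  then show False
    using phaseless_injective_orthogonal_in_span assms(2,3) u(1) \<open>v \<notin> span {\<i> *s u}\<close> by blast
qed

end
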